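(* Fix $\lambda>0$. There exists $c_0=c_0(\lambda)>0$ such that for every $a\in[0,1]$ and every configuration of $\eta$ outside $\Lambda(0)$ for which $0$ is a thin point, $$\mathbb P_\lambda\big[0<\mathrm{w}(0)<2a\ \big|\ \eta \text{ outside }\Lambda(0)\big]\ \ge\ c_0a^2 .$$
   Context: Under $\mathbb P_\lambda$, $\eta$ is a Poisson point process on $\mathbb R^2$ of intensity $\lambda\cdot\mathrm{Leb}$, and each point carries a closed disc of radius $1$ centred at it (the occupied set is the union of these discs). Let $\Lambda(0)=[-2,2]^2$. The point $0$ is called thin if $\eta$ has exactly two points in $[-4,4]^2\setminus\Lambda(0)$, one of them, $\ell(0)$, in $[-3.5,-2.5]\times[-1,1]$ and the other, $r(0)$, in $[2.5,3.5]\times[-1,1]$ (this depends only on $\eta$ outside $\Lambda(0)$). On this event, let $U$ be the union of the unit discs centred at $\ell(0)$, $r(0)$ and at the points of $\eta$ in $\Lambda(0)$, and let $\mathrm{w}(0)$ be the maximal width of the occupied connection between $\ell(0)$ and $r(0)$ produced by the discs centred in $\Lambda(0)$, namely $\mathrm{w}(0)=2\sup_\gamma\mathrm{dist}(\gamma,\mathbb R^2\setminus U)$ over paths $\gamma\subset U$ from $\ell(0)$ to $r(0)$, with $\mathrm{w}(0)=0$ if no such path exists. Conditionally on $\eta$ outside $\Lambda(0)$, $\eta\cap\Lambda(0)$ is a Poisson process of intensity $\lambda$ on $\Lambda(0)$. *)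

theory Defs
  imports "HOL-Analysis.Analysis" "HOL-Probability.Probability"
begin

type_synonym pt = "real \<times> real"

definition Lambda0 :: "pt set" where
  "Lambda0 = {-2..2} \<times> {-2..2}"

definition left_box :: "pt set" where
  "left_box = {-3.5..-2.5} \<times> {-1..1}"

definition right_box :: "pt set" where
  "right_box = {2.5..3.5} \<times> {-1..1}"

text \<open>Law of a Poisson point process of intensity lam (times Lebesgue) on a bounded
  Borel set B, given through its Janossy densities: the probability of an event E
  (a set of finite point configurations) is
  sum over n of exp(-lam |B|) lam^n / n! times the integral over B^n of the indicator
  of E evaluated at the configuration of the n points.\<close>
definition ppp_prob :: "real \<Rightarrow> pt set \<Rightarrow> pt set set \<Rightarrow> ennreal" where
  "ppp_prob lam B E =
     (\<Sum>n. ennreal (exp (- lam * measure lborel B) * lam ^ n / fact n) *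
        (\<integral>\<^sup>+ xs. indicator E (xs ` {..<n})
            \<partial>(PiM {..<n} (\<lambda>_. restrict_space lborel B))))"

definition occ :: "pt \<Rightarrow> pt \<Rightarrow> pt set \<Rightarrow> pt set" where
  "occ l r X = cball l 1 \<union> cball r 1 \<union> (\<Union>x\<in>X. cball x 1)"

definition width :: "pt \<Rightarrow> pt \<Rightarrow> pt set \<Rightarrow> real" where
  "width l r X =
     (let U = occ l r X;
          P = {g. path g \<and> pathstart g = l \<and> pathfinish g = r \<and> path_image g \<subseteq> U}
      in if P = {} then 0 else 2 * (SUP g\<in>P. setdist (path_image g) (- U)))"

end

theory Submission
  imports Defs
begin

(* Keep only the four-point term of the Poisson law. The first point A is taken in a region of area
   a^2/400 where |A - l| = 2 - O(a^2), so that the discs about l and A meet the perpendicular bisector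
   of l and A in a segment of half-length h = sqrt (1 - |A - l|^2 / 4) < a/3. The other three points lie
   in small squares on the way to r; consecutive centres of l, A, B, C, D, r are then less than 2 apart,
   and the polygonal path through them has a tube of positive radius inside the occupied set, whence
   w(0) > 0. The discs about B, C, D and r stay at distance more than 1 from the bisector, which every
   occupied path from l to r must cross; at the crossing point the path is within 3h of an unoccupied
   point of the bisector, whence w(0) <= 6h < 2a. *)

section \<open>Discs, paths and the width of a connection\<close>

lemma ball_subset_cball_Un_cball_segment:
  fixes x y p :: "'a::euclidean_space"
  assumes "p \<in> closed_segment x y"
  shows "ball p (\<rho> - dist x y / 2) \<subseteq> cball x \<rho> \<union> cball y \<rho>"
proof
  fix q assume q: "q \<in> ball p (\<rho> - dist x y / 2)"
  have "dist x p + dist p y = dist x y"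
    using assms by (simp add: between between_mem_segment[symmetric])
  then have "dist p x \<le> dist x y / 2 \<or> dist p y \<le> dist x y / 2"
    by (simp add: dist_commute) linarith
  then show "q \<in> cball x \<rho> \<union> cball y \<rho>"
    using q dist_triangle[of x q p] dist_triangle[of y q p] by (auto simp: dist_commute)
qed

lemma polygonal_path_exists:
  fixes x :: "'a::real_normed_vector"
  shows "\<exists>g. path g \<and> pathstart g = x \<and> pathfinish g = last (x # xs) \<and>
           path_image g \<subseteq> insert x (\<Union>(u, v) \<in> set (zip (x # xs) xs). closed_segment u v)"
proof (induction xs arbitrary: x)
  case Nil
  show ?case by (intro exI[of _ "linepath x x"]) (auto simp: path_const pathstart_def pathfinish_def)
next
  case (Cons y ys)
  then obtain g where g: "path g" "pathstart g = y" "pathfinish g = last (y # ys)"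
    "path_image g \<subseteq> insert y (\<Union>(u, v) \<in> set (zip (y # ys) ys). closed_segment u v)"
    by blast
  have "y \<in> closed_segment x y" by simp
  with g show ?case
    by (intro exI[of _ "linepath x y +++ g"]) (auto simp: path_image_join)
qed

lemma path_crosses_hyperplane:
  fixes g :: "real \<Rightarrow> 'a::real_inner"
  assumes "path g" "inner (pathstart g - m) v \<le> 0" "0 \<le> inner (pathfinish g - m) v"
  obtains p where "p \<in> path_image g" "inner (p - m) v = 0"
proof -
  have "continuous_on {0..1} (\<lambda>t. inner (g t - m) v)"
    using assms(1) unfolding path_def by (intro continuous_intros)
  then obtain t where "0 \<le> t" "t \<le> 1" "inner (g t - m) v = 0"
    using IVT'[of "\<lambda>t. inner (g t - m) v" 0 0 1] assms(2,3)
    by (auto simp: pathstart_def pathfinish_def)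
  then show ?thesis
    using that[of "g t"] by (auto simp: path_image_def)
qed

lemma dist_sq_on_bisector:
  fixes x a b :: "'a::real_inner"
  assumes "inner (x - midpoint a b) (b - a) = 0"
  shows "(dist x a)\<^sup>2 = (dist x (midpoint a b))\<^sup>2 + (dist a b)\<^sup>2 / 4"
    and "(dist x b)\<^sup>2 = (dist x (midpoint a b))\<^sup>2 + (dist a b)\<^sup>2 / 4"
proof -
  define w where "w = x - midpoint a b"
  define u where "u = (1/2) *\<^sub>R (b - a)"
  have xa: "x - a = w + u" and xb: "x - b = w - u"
    by (simp_all add: w_def u_def midpoint_def algebra_simps flip: scaleR_add_left)
  have "inner w u = 0"
    using assms by (simp add: w_def u_def)
  moreover have "(norm u)\<^sup>2 = (dist a b)\<^sup>2 / 4"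
    by (simp add: u_def dist_norm norm_minus_commute power2_eq_square)
  ultimately show "(dist x a)\<^sup>2 = (dist x (midpoint a b))\<^sup>2 + (dist a b)\<^sup>2 / 4"
    and "(dist x b)\<^sup>2 = (dist x (midpoint a b))\<^sup>2 + (dist a b)\<^sup>2 / 4"
    unfolding dist_norm xa xb w_def[symmetric] power2_norm_eq_inner
    by (simp_all add: inner_add_left inner_add_right inner_diff_left inner_diff_right inner_commute)
qed

lemma one_less_dist_from_hyperplane:
  fixes x c m v :: "'a::real_inner"
  assumes "inner (x - m) v = 0" "norm v < inner (c - m) v"
  shows "1 < dist x c"
proof -
  have "norm v < inner (c - x) v"
    using assms by (simp add: inner_diff_left)
  also have "\<dots> \<le> dist x c * norm v"
    using norm_cauchy_schwarz[of "c - x" v] by (simp add: dist_norm norm_minus_commute)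
  finally show ?thesis
    by (metis mult_le_cancel_right2 norm_ge_zero not_less order.strict_implies_order)
qed

lemma beyond_bisector_of_inner:
  fixes l A c :: "'a::real_inner"
  assumes "dist l A < 2" "4 \<le> inner (c - l) (A - l)"
  shows "dist l A < inner (c - midpoint l A) (A - l)"
proof -
  define w where "w = A - l"
  have "c - midpoint l A = (c - l) - (1/2) *\<^sub>R w"
    by (simp add: w_def midpoint_def algebra_simps flip: scaleR_add_left)
  then have "inner (c - midpoint l A) w = inner (c - l) w - inner w w / 2"
    by (simp only: inner_diff_left inner_scaleR_left)
  moreover have "inner w w = (dist l A)\<^sup>2"
    by (simp add: w_def dist_norm norm_minus_commute power2_norm_eq_inner)
  ultimately have "inner (c - midpoint l A) (A - l) = inner (c - l) (A - l) - (dist l A)\<^sup>2 / 2"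
    by (simp add: w_def)
  moreover have "(dist l A)\<^sup>2 < 2\<^sup>2"
    using assms(1) by (intro power_strict_mono) auto
  ultimately show ?thesis
    using assms by simp
qed

lemma bounded_occ: "finite X \<Longrightarrow> bounded (occ l r X)"
  unfolding occ_def by (simp add: bounded_UN)

lemma cball_subset_occ: "c \<in> insert l (insert r X) \<Longrightarrow> cball c 1 \<subseteq> occ l r X"
  by (auto simp: occ_def)

lemma ball_subset_occ_segment:
  assumes "u \<in> insert l (insert r X)" "v \<in> insert l (insert r X)"
    and "dist u v \<le> d" "p \<in> closed_segment u v"
  shows "ball p (1 - d / 2) \<subseteq> occ l r X"
proof -
  have "ball p (1 - d / 2) \<subseteq> cball u 1 \<union> cball v 1"
    by (rule order_trans[OF subset_ball ball_subset_cball_Un_cball_segment[OF assms(4)]])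
      (use assms(3) in linarith)
  then show ?thesis
    using cball_subset_occ[OF assms(1)] cball_subset_occ[OF assms(2)] by blast
qed

lemma width_ge_of_tube:
  assumes "finite X" "0 < e" "path g" "pathstart g = l" "pathfinish g = r"
    and tube: "\<And>p. p \<in> path_image g \<Longrightarrow> ball p e \<subseteq> occ l r X"
  shows "2 * e \<le> width l r X"
proof -
  define U where "U = occ l r X"
  define P where "P = {g. path g \<and> pathstart g = l \<and> pathfinish g = r \<and> path_image g \<subseteq> U}"
  have "path_image g \<subseteq> U"
    using tube \<open>0 < e\<close> unfolding U_def by (meson centre_in_ball subset_iff)
  then have "g \<in> P"
    using assms unfolding P_def by blast
  have "- U \<noteq> {}"
    using bounded_occ[OF \<open>finite X\<close>] not_bounded_UNIV unfolding U_def
    by (metis Compl_empty_eq double_compl)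
  then have "e \<le> setdist (path_image g) (- U)"
    using tube by (force simp: le_setdist_iff U_def)
  also have "\<dots> \<le> (SUP g\<in>P. setdist (path_image g) (- U))"
  proof (rule cSUP_upper[OF \<open>g \<in> P\<close>], rule bdd_aboveI2)
    fix g' assume "g' \<in> P"
    then have "l \<in> path_image g'"
      unfolding P_def by (metis (mono_tags, lifting) mem_Collect_eq pathstart_in_path_image)
    then show "setdist (path_image g') (- U) \<le> setdist {l} (- U)"
      by (intro setdist_subset_left) auto
  qed
  finally show ?thesis
    using \<open>g \<in> P\<close> unfolding width_def Let_def U_def[symmetric] P_def[symmetric] by auto
qed

lemma width_le_of_bottleneck:
  assumes "0 \<le> e"
    and bottleneck: "\<And>g. path g \<Longrightarrow> pathstart g = l \<Longrightarrow> pathfinish g = r \<Longrightarrow>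
      path_image g \<subseteq> occ l r X \<Longrightarrow> \<exists>p \<in> path_image g. \<exists>q. q \<notin> occ l r X \<and> dist p q \<le> e"
  shows "width l r X \<le> 2 * e"
proof -
  define U where "U = occ l r X"
  define P where "P = {g. path g \<and> pathstart g = l \<and> pathfinish g = r \<and> path_image g \<subseteq> U}"
  have "setdist (path_image g) (- U) \<le> e" if "g \<in> P" for g
  proof -
    obtain p q where "p \<in> path_image g" "q \<notin> U" "dist p q \<le> e"
      using bottleneck \<open>g \<in> P\<close> unfolding P_def U_def by blast
    then show ?thesis
      using setdist_le_dist[of p "path_image g" q "- U"] by simp
  qed
  then have "(SUP g\<in>P. setdist (path_image g) (- U)) \<le> e" if "P \<noteq> {}"
    using that by (intro cSUP_least)
  then show ?thesis
    using \<open>0 \<le> e\<close> unfolding width_def Let_def U_def[symmetric] P_def[symmetric] by auto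
qed

lemma width_pos_of_chain:
  assumes "finite X" "set cs \<subseteq> X"
    and links: "\<forall>(u, v) \<in> set (zip (l # cs) (cs @ [r])). dist u v < 2"
  shows "0 < width l r X"
proof -
  define links where "links = set (zip (l # cs) (cs @ [r]))"
  define d where "d = Max ((\<lambda>(u, v). dist u v) ` links)"
  have "links \<noteq> {}"
    by (cases cs) (simp_all add: links_def)
  then have "d < 2"
    unfolding d_def using links by (subst Max_less_iff) (auto simp: links_def)
  have d_ge: "dist u v \<le> d" if "(u, v) \<in> links" for u v
    using Max_ge[OF _ imageI[OF that], of "\<lambda>(u, v). dist u v"] by (simp add: d_def links_def)
  have "0 \<le> d"
    using \<open>links \<noteq> {}\<close> d_ge by (metis ex_in_conv surj_pair zero_le_dist order_trans)
  obtain g where g: "path g" "pathstart g = l" "pathfinish g = r"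
    "path_image g \<subseteq> insert l (\<Union>(u, v) \<in> links. closed_segment u v)"
  proof -
    have "zip (l # cs @ [r]) (cs @ [r]) = zip (l # cs) (cs @ [r])"
      using zip_append1[of "l # cs" "[r]" "cs @ [r]"] by simp
    then show ?thesis
      using polygonal_path_exists[of l "cs @ [r]"] that by (auto simp: links_def)
  qed
  have centres: "u \<in> insert l (insert r X) \<and> v \<in> insert l (insert r X)" if "(u, v) \<in> links" for u v
    using set_zip_leftD[of u v] set_zip_rightD[of u v] that \<open>set cs \<subseteq> X\<close>
    unfolding links_def by fastforce
  have "ball p (1 - d / 2) \<subseteq> occ l r X" if "p \<in> path_image g" for p
  proof -
    consider "p = l" | u v where "(u, v) \<in> links" "p \<in> closed_segment u v"
      using \<open>p \<in> path_image g\<close> g(4) by blast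
    then show ?thesis
    proof cases
      case 1
      then show ?thesis
        using ball_subset_occ_segment[of l l r X l d p] \<open>0 \<le> d\<close> by simp
    next
      case 2
      then show ?thesis
        using centres d_ge ball_subset_occ_segment by blast
    qed
  qed
  then have "2 * (1 - d / 2) \<le> width l r X"
    using \<open>d < 2\<close> by (intro width_ge_of_tube[OF \<open>finite X\<close> _ g(1-3)]) auto
  then show ?thesis
    using \<open>d < 2\<close> by (simp add: algebra_simps)
qed

lemma exists_orthogonal_at_dist:
  fixes m v :: pt
  assumes "v \<noteq> 0" "0 \<le> \<rho>"
  obtains q where "inner (q - m) v = 0" "dist q m = \<rho>"
proof
  define n where "n = (- snd v, fst v)"
  have "norm n = norm v"
    by (cases v) (simp add: n_def norm_Pair add.commute)
  then show "dist (m + (\<rho> / norm v) *\<^sub>R n) m = \<rho>"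
    using assms by (simp add: dist_norm)
  show "inner (m + (\<rho> / norm v) *\<^sub>R n - m) v = 0"
    by (cases v) (simp add: n_def inner_Pair algebra_simps)
qed

lemma bisector_mem_occ_iff:
  fixes l A r x :: pt
  assumes "dist l A \<le> 2" and x: "inner (x - midpoint l A) (A - l) = 0"
    and far: "\<And>c. c \<in> insert r Y \<Longrightarrow> dist l A < inner (c - midpoint l A) (A - l)"
  shows "x \<in> occ l r (insert A Y) \<longleftrightarrow> dist x (midpoint l A) \<le> sqrt (1 - (dist l A)\<^sup>2 / 4)"
proof -
  have "norm (A - l) = dist l A"
    by (simp add: dist_norm norm_minus_commute)
  then have "\<not> dist c x \<le> 1" if "c \<in> insert r Y" for c
    using one_less_dist_from_hyperplane[OF x, of c] far[OF that] by (simp add: dist_commute)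
  then have "x \<in> occ l r (insert A Y) \<longleftrightarrow> dist x l \<le> 1 \<or> dist x A \<le> 1"
    by (auto simp: occ_def dist_commute)
  also have "\<dots> \<longleftrightarrow> (dist x l)\<^sup>2 \<le> 1 \<or> (dist x A)\<^sup>2 \<le> 1"
    by (simp add: power_le_one_iff)
  also have "\<dots> \<longleftrightarrow> (dist x (midpoint l A))\<^sup>2 \<le> 1 - (dist l A)\<^sup>2 / 4"
    using dist_sq_on_bisector[OF x] by auto
  also have "\<dots> \<longleftrightarrow> dist x (midpoint l A) \<le> sqrt (1 - (dist l A)\<^sup>2 / 4)"
    using real_le_rsqrt real_sqrt_le_iff by (metis real_sqrt_abs abs_of_nonneg zero_le_dist)
  finally show ?thesis .
qed

lemma width_le_of_bisector:
  fixes l A r :: pt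
  assumes "0 < dist l A" "dist l A < 2"
    and far: "\<And>c. c \<in> insert r Y \<Longrightarrow> dist l A < inner (c - midpoint l A) (A - l)"
  shows "width l r (insert A Y) \<le> 6 * sqrt (1 - (dist l A)\<^sup>2 / 4)"
proof -
  define m v h where "m = midpoint l A" and "v = A - l" and "h = sqrt (1 - (dist l A)\<^sup>2 / 4)"
  have "(dist l A)\<^sup>2 < 2\<^sup>2"
    using \<open>dist l A < 2\<close> by (intro power_strict_mono) auto
  then have "0 < h"
    by (simp add: h_def)
  have bisector: "x \<in> occ l r (insert A Y) \<longleftrightarrow> dist x m \<le> h" if "inner (x - m) v = 0" for x
    using bisector_mem_occ_iff[OF _ that[unfolded m_def v_def] far] \<open>dist l A < 2\<close>
    by (simp add: m_def h_def)
  obtain q where "inner (q - m) v = 0" "dist q m = 2 * h"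
    using exists_orthogonal_at_dist[of v "2 * h" m] \<open>0 < h\<close> assms(1) by (auto simp: v_def)
  then have "q \<notin> occ l r (insert A Y)"
    using bisector \<open>0 < h\<close> by simp
  have "width l r (insert A Y) \<le> 2 * (3 * h)"
  proof (rule width_le_of_bottleneck)
    fix g assume g: "path g" "pathstart g = l" "pathfinish g = r" "path_image g \<subseteq> occ l r (insert A Y)"
    have "pathstart g - m = (- 1 / 2) *\<^sub>R v"
      by (simp add: g(2) m_def v_def midpoint_def algebra_simps flip: scaleR_add_left)
    then have "inner (pathstart g - m) v \<le> 0"
      by simp
    moreover have "0 \<le> inner (pathfinish g - m) v"
      using far[of r, simplified] zero_le_dist[of l A] unfolding g(3) m_def v_def by linarith
    ultimately obtain p where p: "p \<in> path_image g" "inner (p - m) v = 0"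
      using path_crosses_hyperplane[OF g(1)] by blast
    then have "dist p m \<le> h"
      using bisector g(4) by blast
    then have "dist p q \<le> 3 * h"
      using dist_triangle[of p q m] \<open>dist q m = 2 * h\<close> by (simp add: dist_commute)
    then show "\<exists>p \<in> path_image g. \<exists>q. q \<notin> occ l r (insert A Y) \<and> dist p q \<le> 3 * h"
      using p(1) \<open>q \<notin> occ l r (insert A Y)\<close> by blast
  qed (use \<open>0 < h\<close> in simp)
  then show ?thesis
    by (simp add: h_def)
qed

section \<open>Lower bounds for the Poisson probability\<close>

lemma shear_strip_sets:
  fixes f :: "real \<Rightarrow> real"
  assumes [measurable]: "f \<in> borel_measurable borel" "I \<in> sets borel" "J \<in> sets borel"
  shows "{p :: real \<times> real. fst p \<in> I \<and> snd p - f (fst p) \<in> J} \<in> sets borel"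
proof -
  have "Measurable.pred (lborel \<Otimes>\<^sub>M lborel) (\<lambda>p :: real \<times> real. fst p \<in> I \<and> snd p - f (fst p) \<in> J)"
    by measurable
  then show ?thesis
    by (simp add: pred_def lborel_prod)
qed

lemma emeasure_shear_strip:
  fixes f :: "real \<Rightarrow> real"
  assumes [measurable]: "f \<in> borel_measurable borel" "I \<in> sets borel" "J \<in> sets borel"
  shows "emeasure lborel {p :: real \<times> real. fst p \<in> I \<and> snd p - f (fst p) \<in> J}
           = emeasure lborel I * emeasure lborel J"
proof -
  define S where "S = {p :: real \<times> real. fst p \<in> I \<and> snd p - f (fst p) \<in> J}"
  have [measurable]: "S \<in> sets (lborel \<Otimes>\<^sub>M lborel)"
    unfolding S_def lborel_prod using shear_strip_sets[OF assms] by simp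
  have slice: "emeasure lborel (Pair x -` S) = emeasure lborel J * indicator I x" for x
  proof -
    have "emeasure lborel J = emeasure (distr lborel borel ((+) (- f x))) J"
      by (simp add: lborel_distr_plus)
    also have "\<dots> = emeasure lborel {y. y - f x \<in> J}"
      by (subst emeasure_distr) (auto intro!: arg_cong[where f = "emeasure lborel"])
    finally show ?thesis
      by (auto simp: S_def indicator_def)
  qed
  have "emeasure lborel S = emeasure (lborel \<Otimes>\<^sub>M lborel) S"
    by (simp add: lborel_prod)
  also have "\<dots> = (\<integral>\<^sup>+x. emeasure lborel (Pair x -` S) \<partial>lborel)"
    by (rule lborel.emeasure_pair_measure_alt) measurable
  also have "\<dots> = emeasure lborel J * emeasure lborel I"
    by (simp add: slice nn_integral_cmult_indicator)
  finally show ?thesis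
    by (simp add: S_def mult.commute)
qed

lemma ppp_prob_ge_product:
  fixes G :: "nat \<Rightarrow> pt set"
  assumes "B \<in> sets lborel" "\<And>i. i < n \<Longrightarrow> G i \<in> sets lborel" "\<And>i. i < n \<Longrightarrow> G i \<subseteq> B"
    and config: "\<And>xs. xs \<in> PiE {..<n} G \<Longrightarrow> xs ` {..<n} \<in> E"
  shows "ennreal (exp (- lam * measure lborel B) * lam ^ n / fact n) * (\<Prod>i<n. emeasure lborel (G i))
           \<le> ppp_prob lam B E"
proof -
  define M where "M = restrict_space lborel B"
  interpret product_sigma_finite "\<lambda>_::nat. M"
    unfolding product_sigma_finite_def M_def
    using sigma_finite_measure_restrict_space[OF lborel.sigma_finite_measure_axioms \<open>B \<in> sets lborel\<close>]
    by simp
  have sets_M: "G i \<in> sets M" and emeasure_M: "emeasure M (G i) = emeasure lborel (G i)" if "i < n" for i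
    using assms(1-3) that unfolding M_def
    by (simp_all add: sets_restrict_space_iff emeasure_restrict_space)
  have "(\<Prod>i<n. emeasure lborel (G i)) = emeasure (PiM {..<n} (\<lambda>_. M)) (PiE {..<n} G)"
    by (subst emeasure_PiM) (simp_all add: sets_M emeasure_M)
  also have "\<dots> = (\<integral>\<^sup>+ xs. indicator (PiE {..<n} G) xs \<partial>PiM {..<n} (\<lambda>_. M))"
    by (intro nn_integral_indicator[symmetric] sets_PiM_I_finite) (simp_all add: sets_M)
  also have "\<dots> \<le> (\<integral>\<^sup>+ xs. indicator E (xs ` {..<n}) \<partial>PiM {..<n} (\<lambda>_. M))"
    by (intro nn_integral_mono) (auto simp: indicator_def config)
  finally have "ennreal (exp (- lam * measure lborel B) * lam ^ n / fact n) * (\<Prod>i<n. emeasure lborel (G i))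
      \<le> ennreal (exp (- lam * measure lborel B) * lam ^ n / fact n) *
        (\<integral>\<^sup>+ xs. indicator E (xs ` {..<n}) \<partial>PiM {..<n} (\<lambda>_. M))"
    by (rule mult_left_mono) simp
  also have "\<dots> \<le> ppp_prob lam B E"
    unfolding ppp_prob_def M_def
    by (rule sum_le_suminf[where I = "{n}", simplified]) auto
  finally show ?thesis .
qed

section \<open>The thin configuration\<close>

lemma dist_less_of_coord_bounds:
  fixes x y :: pt
  assumes "- X \<le> fst x - fst y" "fst x - fst y \<le> X" "- Y \<le> snd x - snd y" "snd x - snd y \<le> Y"
    and "X\<^sup>2 + Y\<^sup>2 < d\<^sup>2" "0 \<le> d"
  shows "dist x y < d"
proof -
  have "\<bar>fst x - fst y\<bar> \<le> X" "\<bar>snd x - snd y\<bar> \<le> Y"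
    using assms(1-4) by linarith+
  then have "(fst x - fst y)\<^sup>2 \<le> X\<^sup>2" "(snd x - snd y)\<^sup>2 \<le> Y\<^sup>2"
    using power_mono[OF _ abs_ge_zero, of _ X 2] power_mono[OF _ abs_ge_zero, of _ Y 2]
    by simp_all
  then have "sqrt ((fst x - fst y)\<^sup>2 + (snd x - snd y)\<^sup>2) < sqrt (d\<^sup>2)"
    using assms(5) by (subst real_sqrt_less_iff) linarith
  then show ?thesis
    using \<open>0 \<le> d\<close> by (simp add: dist_prod_def dist_real_def)
qed

lemma bilinear_lower_bound:
  fixes x y v w X Y V W :: real
  assumes "0 \<le> X" "X \<le> x" "0 \<le> V" "V \<le> v" "0 \<le> Y" "- Y \<le> y" "0 \<le> w" "w \<le> W"
  shows "X * V - Y * W \<le> x * v + y * w"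
proof -
  have "X * V \<le> x * v"
    using assms by (intro mult_mono) auto
  moreover have "- (Y * W) \<le> - (Y * w)"
    using assms by (simp add: mult_left_mono)
  moreover have "- Y * w \<le> y * w"
    using assms by (intro mult_right_mono)
  ultimately show ?thesis
    by linarith
qed

definition neck_region :: "real \<Rightarrow> pt \<Rightarrow> pt set" where
  "neck_region a l = {p. fst p \<in> {fst l + 39/20 .. fst l + 199/100} \<and>
     snd p - (snd l + sqrt (4 - (fst p - fst l)\<^sup>2)) \<in> {- a\<^sup>2 / 8 .. - a\<^sup>2 / 16}}"

definition square :: "pt \<Rightarrow> pt set" where
  "square c = {fst c - 1/20 .. fst c + 1/20} \<times> {snd c - 1/20 .. snd c + 1/20}"

definition relay :: "pt \<Rightarrow> pt \<Rightarrow> real \<Rightarrow> pt" where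
  "relay l r t = (1 - t) *\<^sub>R (l + (197/100, 3/10)) + t *\<^sub>R (r - (8/5, 0))"

lemma neck_region_coords:
  assumes "A \<in> neck_region a l" "0 < a" "a \<le> 1"
  shows "39/20 \<le> fst A - fst l" "fst A - fst l \<le> 199/100"
    and "13/200 \<le> snd A - snd l" "snd A - snd l \<le> 89/200"
    and "0 < 4 - (dist l A)\<^sup>2" "4 - (dist l A)\<^sup>2 < 4 * a\<^sup>2 / 9"
proof -
  define v1 v2 where "v1 = fst A - fst l" and "v2 = snd A - snd l"
  define s where "s = sqrt (4 - v1\<^sup>2)"
  have v1: "39/20 \<le> v1" "v1 \<le> 199/100" and v2: "s - a\<^sup>2/8 \<le> v2" "v2 \<le> s - a\<^sup>2/16"
    using assms(1) by (auto simp: neck_region_def v1_def v2_def s_def)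
  then have "(39/20)\<^sup>2 \<le> v1\<^sup>2" "v1\<^sup>2 \<le> (199/100)\<^sup>2"
    by (auto intro: power_mono)
  then have "sqrt ((19/100)\<^sup>2) \<le> s" "s \<le> sqrt ((89/200)\<^sup>2)"
    unfolding s_def by (simp_all add: power2_eq_square)
  then have s: "19/100 \<le> s" "s \<le> 89/200"
    by simp_all
  have "0 < a\<^sup>2" "a\<^sup>2 \<le> 1"
    using assms(2,3) by (simp_all add: power_le_one)
  then show "39/20 \<le> fst A - fst l" "fst A - fst l \<le> 199/100"
    and "13/200 \<le> snd A - snd l" "snd A - snd l \<le> 89/200"
    using v1 v2 s unfolding v1_def v2_def by linarith+
  have "(dist l A)\<^sup>2 = v1\<^sup>2 + v2\<^sup>2"
    by (simp add: dist_prod_def dist_real_def v1_def v2_def power2_commute)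
  moreover have "s\<^sup>2 = 4 - v1\<^sup>2"
    unfolding s_def using \<open>v1\<^sup>2 \<le> (199/100)\<^sup>2\<close> by (simp add: power2_eq_square)
  ultimately have factor: "4 - (dist l A)\<^sup>2 = (s - v2) * (s + v2)"
    by (simp add: power2_eq_square algebra_simps)
  have diff: "0 < s - v2" "s - v2 \<le> a\<^sup>2 / 8" and sum: "0 < s + v2" "s + v2 \<le> 89/100"
    using v2 s \<open>0 < a\<^sup>2\<close> \<open>a\<^sup>2 \<le> 1\<close> by linarith+
  have "0 < (s - v2) * (s + v2)"
    using diff(1) sum(1) by (rule mult_pos_pos)
  moreover have "(s - v2) * (s + v2) \<le> a\<^sup>2 / 8 * (89/100)"
    using diff(2) sum(2) by (rule mult_mono) (use sum(1) in simp_all)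
  ultimately
  show "0 < 4 - (dist l A)\<^sup>2" "4 - (dist l A)\<^sup>2 < 4 * a\<^sup>2 / 9"
    unfolding factor using \<open>0 < a\<^sup>2\<close> by linarith+
qed

lemma neck_region_dist:
  assumes "A \<in> neck_region a l" "0 < a" "a \<le> 1"
  shows "dist l A < 2" "3 * sqrt (1 - (dist l A)\<^sup>2 / 4) < a"
proof -
  have "(dist l A)\<^sup>2 < 2\<^sup>2"
    using neck_region_coords(5)[OF assms] by simp
  then show "dist l A < 2"
    by (rule power2_less_imp_less) simp
  have "1 - (dist l A)\<^sup>2 / 4 < (a / 3)\<^sup>2"
    using neck_region_coords(6)[OF assms] by (simp add: power_divide)
  then have "sqrt (1 - (dist l A)\<^sup>2 / 4) < sqrt ((a / 3)\<^sup>2)"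
    by (simp only: real_sqrt_less_iff)
  then show "3 * sqrt (1 - (dist l A)\<^sup>2 / 4) < a"
    using \<open>0 < a\<close> by simp
qed

lemma left_box_coords:
  assumes "l \<in> left_box"
  shows "-7/2 \<le> fst l" "fst l \<le> -5/2" "-1 \<le> snd l" "snd l \<le> 1"
  using assms by (auto simp: left_box_def)

lemma right_box_coords:
  assumes "r \<in> right_box"
  shows "5/2 \<le> fst r" "fst r \<le> 7/2" "-1 \<le> snd r" "snd r \<le> 1"
  using assms by (auto simp: right_box_def)

(* Stated with t multiplied out, so that linarith can use its instances at numeral values of t. *)
lemma relay_coords:
  "relay l r t = (fst l + t * fst r - t * fst l + 197/100 - t * (357/100),
                  snd l + t * snd r - t * snd l + 3/10 - t * (3/10))"
  by (cases l, cases r) (simp add: relay_def field_simps)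

lemma mem_square_coords:
  assumes "x \<in> square c"
  shows "fst c - 1/20 \<le> fst x" "fst x \<le> fst c + 1/20" "snd c - 1/20 \<le> snd x" "snd x \<le> snd c + 1/20"
  using assms by (auto simp: square_def)

lemma square_relay_subset_Lambda0:
  assumes "l \<in> left_box" "r \<in> right_box" "0 \<le> t" "t \<le> 1"
  shows "square (relay l r t) \<subseteq> Lambda0"
proof -
  define K :: "pt set" where "K = {-39/20 .. 39/20} \<times> {-39/20 .. 39/20}"
  have "l + (197/100, 3/10) \<in> K" "r - (8/5, 0) \<in> K"
    using left_box_coords[OF assms(1)] right_box_coords[OF assms(2)] by (auto simp: K_def mem_Times_iff)
  moreover have "convex K"
    by (simp add: K_def convex_Times)
  ultimately have "closed_segment (l + (197/100, 3/10)) (r - (8/5, 0)) \<subseteq> K"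
    by (rule closed_segment_subset)
  moreover have "relay l r t \<in> closed_segment (l + (197/100, 3/10)) (r - (8/5, 0))"
    using assms(3,4) unfolding relay_def in_segment by blast
  ultimately show ?thesis
    by (auto simp: K_def square_def Lambda0_def)
qed

lemma neck_region_subset_Lambda0:
  assumes "l \<in> left_box" "0 < a" "a \<le> 1"
  shows "neck_region a l \<subseteq> Lambda0"
proof
  fix A assume "A \<in> neck_region a l"
  then show "A \<in> Lambda0"
    using neck_region_coords(1-4)[OF \<open>A \<in> neck_region a l\<close> assms(2,3)] left_box_coords[OF assms(1)]
    unfolding Lambda0_def mem_Times_iff atLeastAtMost_iff by (intro conjI; linarith)
qed

lemma configuration_links:
  assumes "l \<in> left_box" "r \<in> right_box" "0 < a" "a \<le> 1" "A \<in> neck_region a l"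
    and "B \<in> square (relay l r (1/3))" "C \<in> square (relay l r (2/3))" "D \<in> square (relay l r 1)"
  shows "dist l A < 2" "dist A B < 2" "dist B C < 2" "dist C D < 2" "dist D r < 2"
proof -
  note B = mem_square_coords[OF assms(6), unfolded relay_coords fst_conv snd_conv]
  note C = mem_square_coords[OF assms(7), unfolded relay_coords fst_conv snd_conv]
  note D = mem_square_coords[OF assms(8), unfolded relay_coords fst_conv snd_conv]
  note A = neck_region_coords(1-4)[OF assms(5,3,4)]
  note l = left_box_coords[OF assms(1)] and r = right_box_coords[OF assms(2)]
  show "dist l A < 2"
    using neck_region_dist(1)[OF assms(5,3,4)] .
  show "dist A B < 2"
    by (rule dist_less_of_coord_bounds[where X = "5/4" and Y = 1])
      (use l r A B in \<open>linarith | simp add: power2_eq_square\<close>)+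
  show "dist B C < 2"
    by (rule dist_less_of_coord_bounds[where X = "5/4" and Y = "9/10"])
      (use l r B C in \<open>linarith | simp add: power2_eq_square\<close>)+
  show "dist C D < 2"
    by (rule dist_less_of_coord_bounds[where X = "5/4" and Y = "9/10"])
      (use l r C D in \<open>linarith | simp add: power2_eq_square\<close>)+
  show "dist D r < 2"
    by (rule dist_less_of_coord_bounds[where X = "33/20" and Y = "1/20"])
      (use D in \<open>linarith | simp add: power2_eq_square\<close>)+
qed

lemma configuration_beyond_bisector:
  assumes "l \<in> left_box" "r \<in> right_box" "0 < a" "a \<le> 1" "A \<in> neck_region a l"
    and "B \<in> square (relay l r (1/3))" "C \<in> square (relay l r (2/3))" "D \<in> square (relay l r 1)"
    and "c \<in> {r, B, C, D}"
  shows "dist l A < inner (c - midpoint l A) (A - l)"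
proof (rule beyond_bisector_of_inner)
  note B = mem_square_coords[OF assms(6), unfolded relay_coords fst_conv snd_conv]
  note C = mem_square_coords[OF assms(7), unfolded relay_coords fst_conv snd_conv]
  note D = mem_square_coords[OF assms(8), unfolded relay_coords fst_conv snd_conv]
  note A = neck_region_coords(1-4)[OF assms(5,3,4)]
  note l = left_box_coords[OF assms(1)] and r = right_box_coords[OF assms(2)]
  have inner_ge: "4 \<le> inner (c - l) (A - l)"
    if "0 \<le> X" "X \<le> fst c - fst l" "0 \<le> Y" "- Y \<le> snd c - snd l" "4 \<le> X * (39/20) - Y * (89/200)"
    for c X Y
  proof -
    have "X * (39/20) - Y * (89/200)
        \<le> (fst c - fst l) * (fst A - fst l) + (snd c - snd l) * (snd A - snd l)"
      by (rule bilinear_lower_bound) (use that A in linarith)+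
    then show ?thesis
      using that(5) by (simp add: inner_prod_def)
  qed
  have "4 \<le> inner (r - l) (A - l)"
    by (rule inner_ge[where X = 5 and Y = 2]) (use l r in linarith)+
  moreover have "4 \<le> inner (B - l) (A - l)"
    by (rule inner_ge[where X = "239/100" and Y = "13/25"]) (use l r B in linarith)+
  moreover have "4 \<le> inner (C - l) (A - l)"
    by (rule inner_ge[where X = "287/100" and Y = "129/100"]) (use l r C in linarith)+
  moreover have "4 \<le> inner (D - l) (A - l)"
    by (rule inner_ge[where X = "67/20" and Y = "41/20"]) (use l r D in linarith)+
  ultimately show "4 \<le> inner (c - l) (A - l)"
    using \<open>c \<in> {r, B, C, D}\<close> by blast
  show "dist l A < 2"
    using neck_region_dist(1)[OF assms(5,3,4)] .
qed

lemma configuration_width: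
  assumes "l \<in> left_box" "r \<in> right_box" "0 < a" "a \<le> 1" "A \<in> neck_region a l"
    and "B \<in> square (relay l r (1/3))" "C \<in> square (relay l r (2/3))" "D \<in> square (relay l r 1)"
  shows "0 < width l r {A, B, C, D}" "width l r {A, B, C, D} < 2 * a"
proof -
  show "0 < width l r {A, B, C, D}"
    by (rule width_pos_of_chain[where cs = "[A, B, C, D]"]) (use configuration_links[OF assms] in auto)
  have "A \<noteq> l"
    using neck_region_coords(1)[OF assms(5,3,4)] by auto
  then have "width l r (insert A {B, C, D}) \<le> 6 * sqrt (1 - (dist l A)\<^sup>2 / 4)"
    by (intro width_le_of_bisector configuration_beyond_bisector[OF assms])
      (simp_all add: neck_region_dist(1)[OF assms(5,3,4)])
  then show "width l r {A, B, C, D} < 2 * a"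
    using neck_region_dist(2)[OF assms(5,3,4)] by simp
qed

lemma neck_region_sets: "neck_region a l \<in> sets borel"
  unfolding neck_region_def by (rule shear_strip_sets) measurable

lemma emeasure_neck_region: "emeasure lborel (neck_region a l) = ennreal (a\<^sup>2 / 400)"
  unfolding neck_region_def
  by (subst emeasure_shear_strip) (simp_all flip: ennreal_mult)

lemma square_sets: "square c \<in> sets borel"
  unfolding square_def by (intro borel_closed closed_Times) simp_all

lemma emeasure_square: "emeasure lborel (square c) = ennreal (1/100)"
proof -
  have "emeasure lborel (square c) = emeasure (lborel \<Otimes>\<^sub>M lborel) (square c)"
    by (simp add: lborel_prod)
  also have "\<dots> = ennreal (1/10) * ennreal (1/10)"
    unfolding square_def by (subst lborel.emeasure_pair_measure_Times) simp_all
  finally show ?thesis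
    by (simp flip: ennreal_mult)
qed

lemma ppp_prob_width_in_range_ge:
  fixes lam :: real
  assumes l: "l \<in> left_box" and r: "r \<in> right_box" and "0 < a" "a \<le> 1"
  defines "K \<equiv> exp (- lam * measure lborel Lambda0) * lam ^ 4 / fact 4"
  shows "ennreal (K / (4 * 10^8) * a\<^sup>2) \<le> ppp_prob lam Lambda0 {X. 0 < width l r X \<and> width l r X < 2 * a}"
proof -
  define G where "G i = (if i = 0 then neck_region a l else square (relay l r (i / 3)))" for i :: nat
  have "Lambda0 \<in> sets lborel"
    unfolding Lambda0_def by (simp add: borel_closed closed_Times)
  moreover have "G i \<in> sets lborel" "G i \<subseteq> Lambda0" if "i < 4" for i
    using that neck_region_subset_Lambda0[OF l \<open>0 < a\<close> \<open>a \<le> 1\<close>] square_relay_subset_Lambda0[OF l r]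
    by (auto simp: G_def neck_region_sets square_sets)
  moreover have "xs ` {..<4} \<in> {X. 0 < width l r X \<and> width l r X < 2 * a}" if "xs \<in> PiE {..<4} G" for xs
  proof -
    have mem: "xs i \<in> G i" if "i < 4" for i
      using \<open>xs \<in> PiE {..<4} G\<close> that by auto
    have "xs 0 \<in> neck_region a l" "xs 1 \<in> square (relay l r (1/3))"
      "xs 2 \<in> square (relay l r (2/3))" "xs 3 \<in> square (relay l r 1)"
      using mem[of 0] mem[of 1] mem[of 2] mem[of 3] by (simp_all add: G_def)
    moreover have "xs ` {..<4} = {xs 0, xs 1, xs 2, xs 3}"
      by (auto simp: lessThan_nat_numeral)
    ultimately show ?thesis
      using configuration_width[OF l r \<open>0 < a\<close> \<open>a \<le> 1\<close>] by simp
  qed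
  ultimately have "ennreal K * (\<Prod>i<4. emeasure lborel (G i))
      \<le> ppp_prob lam Lambda0 {X. 0 < width l r X \<and> width l r X < 2 * a}"
    unfolding K_def by (rule ppp_prob_ge_product)
  moreover have "(\<Prod>i<4. emeasure lborel (G i)) = ennreal (a\<^sup>2 / (4 * 10^8))"
    by (simp add: G_def lessThan_nat_numeral emeasure_neck_region emeasure_square ennreal_mult[symmetric])
  ultimately show ?thesis
    by (simp add: K_def ennreal_mult[symmetric])
qed

theorem lemma5p1:
  fixes lam :: real
  assumes "lam > 0"
  shows "\<exists>c0 > 0. \<forall>a \<in> {0..1}. \<forall>l \<in> left_box. \<forall>r \<in> right_box.
           ppp_prob lam Lambda0 {X. 0 < width l r X \<and> width l r X < 2 * a}
             \<ge> ennreal (c0 * a\<^sup>2)"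
proof (intro exI conjI ballI)
  show "0 < exp (- lam * measure lborel Lambda0) * lam ^ 4 / fact 4 / (4 * 10^8)"
    using assms by simp
  fix a :: real and l r :: pt
  assume "a \<in> {0..1}" "l \<in> left_box" "r \<in> right_box"
  then show "ennreal (exp (- lam * measure lborel Lambda0) * lam ^ 4 / fact 4 / (4 * 10^8) * a\<^sup>2)
      \<le> ppp_prob lam Lambda0 {X. 0 < width l r X \<and> width l r X < 2 * a}"
    using ppp_prob_width_in_range_ge[of l r a lam] by (cases "a = 0") auto
qed

end
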